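(* For every integer $n\ge4$, $$D_3(n)=2A(n-3)-2A(n-1)+2A(n).$$
   Context: $A(n)$ is the number of partitions of $n$ into distinct parts. $D_3(n)$ is the number of partitions of $n$ into non-negative parts (the part $0$ is allowed) in which the smallest part appears exactly $3$ times and no other part is repeated. *)

theory Defs
  imports Main "HOL-Library.Multiset"
begin

definition A :: "nat \<Rightarrow> nat" where
  "A n = card {M :: nat multiset. sum_mset M = n \<and> 0 \<notin># M \<and> (\<forall>x\<in>#M. count M x = 1)}"

definition D3 :: "nat \<Rightarrow> nat" where
  "D3 n = card {M :: nat multiset. sum_mset M = n \<and> M \<noteq> {#} \<and>
      count M (Min (set_mset M)) = 3 \<and>
      (\<forall>x\<in>#M. x \<noteq> Min (set_mset M) \<longrightarrow> count M x = 1)}"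

end

theory Submission
  imports Defs
begin

text \<open>
  Deleting the three copies of the smallest part s of a partition counted by D3(n) leaves a
  partition of n - 3s into distinct parts greater than s. Writing Q s k for the number of
  partitions of k into distinct parts greater than s, we get D3(n) = sum over s of Q s (n - 3s).
  Splitting on whether s + 1 is a part gives Q s k = Q (s+1) k + Q (s+1) (k - s - 1), and with
  this recurrence an explicit eight-term combination Q_tail s k of values of Q s satisfies
  Q_tail s k - Q_tail (s+1) k = Q s (k - 3s) and vanishes once s \<ge> k \<ge> 4. So the sum
  telescopes to Q_tail 0 n = 2 Q 0 n - 2 Q 0 (n - 1) + 2 Q 0 (n - 3), and Q 0 = A.
\<close>

definition distinct_partitions_gt :: "nat \<Rightarrow> int \<Rightarrow> nat set set" where
  "distinct_partitions_gt s k = {S. finite S \<and> S \<subseteq> {s<..} \<and> int (\<Sum>S) = k}"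

text \<open>The size k is an integer so that Q s k = 0 for k < 0 needs no truncated subtraction.\<close>

definition Q :: "nat \<Rightarrow> int \<Rightarrow> int" where
  "Q s k = int (card (distinct_partitions_gt s k))"

lemma member_le_Sum_nat: "finite S \<Longrightarrow> x \<in> S \<Longrightarrow> x \<le> \<Sum>S" for S :: "nat set"
  by (rule member_le_sum) auto

lemma distinct_partitions_gt_subset_Pow: "distinct_partitions_gt s k \<subseteq> Pow {..nat k}"
proof
  fix S assume "S \<in> distinct_partitions_gt s k"
  then have "finite S" and k: "k = int (\<Sum>S)"
    unfolding distinct_partitions_gt_def by auto
  then show "S \<in> Pow {..nat k}"
    unfolding k nat_int using member_le_Sum_nat by blast
qed

lemma finite_distinct_partitions_gt: "finite (distinct_partitions_gt s k)"
  by (rule finite_subset[OF distinct_partitions_gt_subset_Pow]) simp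

lemma distinct_partitions_gt_eq_empty:
  assumes "k < 0 \<or> 0 < k \<and> k \<le> int s"
  shows "distinct_partitions_gt s k = {}"
proof -
  have False if "finite S" "S \<subseteq> {s<..}" "int (\<Sum>S) = k" for S
  proof -
    from that assms have "S \<noteq> {}" by auto
    then obtain x where "x \<in> S" by blast
    with that have "x \<le> \<Sum>S" "s < x" by (auto intro: member_le_Sum_nat)
    with that assms show False by linarith
  qed
  then show ?thesis unfolding distinct_partitions_gt_def by blast
qed

lemma Q_eq_0: "k < 0 \<or> 0 < k \<and> k \<le> int s \<Longrightarrow> Q s k = 0"
  by (simp add: Q_def distinct_partitions_gt_eq_empty)

lemma distinct_partitions_gt_Suc:
  "distinct_partitions_gt s k =
     distinct_partitions_gt (Suc s) k \<union>
     insert (Suc s) ` distinct_partitions_gt (Suc s) (k - int (Suc s))"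
    (is "?L = ?R1 \<union> ?R2")
proof (intro equalityI subsetI)
  fix S assume S: "S \<in> ?L"
  show "S \<in> ?R1 \<union> ?R2"
  proof (cases "Suc s \<in> S")
    case True
    with S have "S - {Suc s} \<in> distinct_partitions_gt (Suc s) (k - int (Suc s))"
      unfolding distinct_partitions_gt_def by (auto simp: sum_diff1)
    moreover from True have "S = insert (Suc s) (S - {Suc s})" by blast
    ultimately show ?thesis by (intro UnI2) (rule image_eqI)
  next
    case False
    have "S \<subseteq> {Suc s<..}"
    proof
      fix x assume "x \<in> S"
      with S False have "s < x" "x \<noteq> Suc s"
        unfolding distinct_partitions_gt_def by auto
      then show "x \<in> {Suc s<..}" by simp
    qed
    with S show ?thesis
      unfolding distinct_partitions_gt_def by (intro UnI1) simp
  qed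
next
  fix S assume "S \<in> ?R1 \<union> ?R2"
  then show "S \<in> ?L"
  proof
    assume "S \<in> ?R1"
    then show ?thesis unfolding distinct_partitions_gt_def by auto
  next
    assume "S \<in> ?R2"
    then obtain T where T: "T \<in> distinct_partitions_gt (Suc s) (k - int (Suc s))"
      and S: "S = insert (Suc s) T" by blast
    moreover from T have "Suc s \<notin> T"
      unfolding distinct_partitions_gt_def by auto
    ultimately show ?thesis
      unfolding distinct_partitions_gt_def by auto
  qed
qed

lemma Q_Suc: "Q s k = Q (Suc s) k + Q (Suc s) (k - int s - 1)"
proof -
  let ?P = "distinct_partitions_gt (Suc s)"
  have "inj_on (insert (Suc s)) (?P j)" for j
  proof (rule inj_onI)
    fix X Y assume "X \<in> ?P j" "Y \<in> ?P j" "insert (Suc s) X = insert (Suc s) Y"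
    moreover from this have "Suc s \<notin> X" "Suc s \<notin> Y"
      by (auto simp: distinct_partitions_gt_def)
    ultimately show "X = Y" by (metis insert_ident)
  qed
  moreover have "?P k \<inter> insert (Suc s) ` ?P j = {}" for j
    by (auto simp: distinct_partitions_gt_def)
  ultimately show ?thesis
    unfolding Q_def distinct_partitions_gt_Suc[of s k]
    by (simp add: card_Un_disjoint card_image finite_distinct_partitions_gt algebra_simps)
qed

text \<open>Closed form, for k \<ge> 4, of the tail sum of Q t (k - 3t) over t \<ge> s.\<close>

definition Q_tail :: "nat \<Rightarrow> int \<Rightarrow> int" where
  "Q_tail s k = Q s (k - 3 * int s) + Q s (k - 2 - 2 * int s) + Q s (k - 3 - int s)
     - Q s (k - 1 - int s) + Q s k - Q s (k - 1) - Q s (k - 2) + Q s (k - 3)"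

lemma Q_tail_diff: "Q_tail s k - Q_tail (Suc s) k = Q s (k - 3 * int s)"
proof -
  have "Q s (k - 3 * int s) = Q (Suc s) (k - 3 * int s) + Q (Suc s) (k - 1 - 4 * int s)"
    "Q s (k - 2 - 2 * int s) = Q (Suc s) (k - 2 - 2 * int s) + Q (Suc s) (k - 3 - 3 * int s)"
    "Q s (k - 3 - int s) = Q (Suc s) (k - 3 - int s) + Q (Suc s) (k - 4 - 2 * int s)"
    "Q s (k - 1 - int s) = Q (Suc s) (k - 1 - int s) + Q (Suc s) (k - 2 - 2 * int s)"
    "Q s k = Q (Suc s) k + Q (Suc s) (k - 1 - int s)"
    "Q s (k - 1) = Q (Suc s) (k - 1) + Q (Suc s) (k - 2 - int s)"
    "Q s (k - 2) = Q (Suc s) (k - 2) + Q (Suc s) (k - 3 - int s)"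
    "Q s (k - 3) = Q (Suc s) (k - 3) + Q (Suc s) (k - 4 - int s)"
    by (simp_all add: Q_Suc[of s] algebra_simps)
  then show ?thesis
    unfolding Q_tail_def by (simp add: algebra_simps)
qed

lemma Q_tail_eq_0: "4 \<le> k \<Longrightarrow> k \<le> int s \<Longrightarrow> Q_tail s k = 0"
  unfolding Q_tail_def by (simp add: Q_eq_0)

lemma sum_Q_eq_Q_tail_0:
  assumes "4 \<le> k"
  shows "(\<Sum>s\<le>nat k. Q s (k - 3 * int s)) = Q_tail 0 k"
proof -
  have "(\<Sum>s\<le>nat k. Q s (k - 3 * int s)) = (\<Sum>s\<le>nat k. Q_tail s k - Q_tail (Suc s) k)"
    by (simp add: Q_tail_diff)
  also have "\<dots> = Q_tail 0 k - Q_tail (Suc (nat k)) k"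
    by (rule sum_telescope)
  also have "\<dots> = Q_tail 0 k"
    using assms by (simp add: Q_tail_eq_0)
  finally show ?thesis .
qed

lemma sum_mset_mset_set: "sum_mset (mset_set S) = \<Sum>S" for S :: "'a::comm_monoid_add set"
  by (simp add: sum_unfold_sum_mset)

lemma mset_set_set_mset_eq:
  assumes "\<forall>x\<in>#M. count M x = 1"
  shows "mset_set (set_mset M) = M"
proof (rule multiset_eqI)
  fix x show "count (mset_set (set_mset M)) x = count M x"
    using assms by (cases "x \<in># M") (auto simp: not_in_iff)
qed

lemma A_eq_Q_0: "int (A n) = Q 0 (int n)"
proof -
  let ?M = "{M :: nat multiset. sum_mset M = n \<and> 0 \<notin># M \<and> (\<forall>x\<in>#M. count M x = 1)}"
  have "bij_betw mset_set (distinct_partitions_gt 0 (int n)) ?M"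
  proof (rule bij_betw_byWitness[where f' = set_mset])
    show "\<forall>M\<in>?M. mset_set (set_mset M) = M"
      by (simp add: mset_set_set_mset_eq)
    show "set_mset ` ?M \<subseteq> distinct_partitions_gt 0 (int n)"
    proof (rule image_subsetI)
      fix M assume M: "M \<in> ?M"
      then have "\<Sum>(set_mset M) = n"
        by (metis (mono_tags, lifting) mem_Collect_eq mset_set_set_mset_eq sum_mset_mset_set)
      with M show "set_mset M \<in> distinct_partitions_gt 0 (int n)"
        by (auto simp del: of_nat_sum simp: distinct_partitions_gt_def) (metis gr0I)
    qed
  qed (auto simp del: of_nat_sum simp: distinct_partitions_gt_def sum_mset_mset_set)
  then show ?thesis
    unfolding A_def Q_def by (simp add: bij_betw_same_card)
qed

lemma multiset_eq_smallest_part_plus_rest: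
  assumes "\<forall>x\<in>#M. x \<noteq> Min (set_mset M) \<longrightarrow> count M x = 1"
  shows "replicate_mset (count M (Min (set_mset M))) (Min (set_mset M))
           + mset_set (set_mset M - {Min (set_mset M)}) = M"
proof (rule multiset_eqI)
  fix x show "count (replicate_mset (count M (Min (set_mset M))) (Min (set_mset M))
             + mset_set (set_mset M - {Min (set_mset M)})) x = count M x"
    using assms by (cases "x \<in># M") (auto simp: not_in_iff)
qed

lemma Min_insert_greaterThan: "finite S \<Longrightarrow> S \<subseteq> {s<..} \<Longrightarrow> Min (insert s S) = s"
  for s :: "'a::linorder"
  by (rule Min_insert2) (auto simp: subset_iff)

lemma remove_smallest_part_in_distinct_partitions_gt:
  fixes M :: "nat multiset"
  defines "s \<equiv> Min (set_mset M)"
  assumes "0 < r" and "count M s = r" and "\<forall>x\<in>#M. x \<noteq> s \<longrightarrow> count M x = 1"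
  shows "s \<le> sum_mset M"
    and "set_mset M - {s} \<in> distinct_partitions_gt s (int (sum_mset M) - int (r * s))"
proof -
  define S where "S = set_mset M - {s}"
  have "replicate_mset r s + mset_set S = M"
    using assms multiset_eq_smallest_part_plus_rest unfolding S_def by auto
  then have sum: "sum_mset M = r * s + \<Sum>S"
    by (auto simp: sum_mset_mset_set)
  have "s \<le> r * s" using assms by simp
  with sum show "s \<le> sum_mset M" by linarith
  have "S \<subseteq> {s<..}"
  proof
    fix x assume "x \<in> S"
    then have "s \<le> x" "x \<noteq> s" by (auto simp: S_def s_def)
    then show "x \<in> {s<..}" by simp
  qed
  moreover have "finite S" by (simp add: S_def)
  ultimately show "set_mset M - {s} \<in> distinct_partitions_gt s (int (sum_mset M) - int (r * s))"
    unfolding S_def[symmetric] distinct_partitions_gt_def using sum by simp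
qed

lemma card_partitions_smallest_part_mult:
  assumes "0 < r"
  shows "card {M :: nat multiset. sum_mset M = n \<and> M \<noteq> {#} \<and>
            count M (Min (set_mset M)) = r \<and>
            (\<forall>x\<in>#M. x \<noteq> Min (set_mset M) \<longrightarrow> count M x = 1)}
         = (\<Sum>s\<le>n. card (distinct_partitions_gt s (int n - int (r * s))))"
    (is "card ?D = _")
proof -
  let ?G = "SIGMA s:{..n}. distinct_partitions_gt s (int n - int (r * s))"
  let ?f = "\<lambda>(s, S). replicate_mset r s + mset_set S"
  let ?g = "\<lambda>M. (Min (set_mset M), set_mset M - {Min (set_mset M)})"
  have "bij_betw ?f ?G ?D"
  proof (rule bij_betw_byWitness[where f' = ?g])
    show "\<forall>p\<in>?G. ?g (?f p) = p"
      using assms by (auto simp: distinct_partitions_gt_def Min_insert_greaterThan)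
    show "\<forall>M\<in>?D. ?f (?g M) = M"
      using multiset_eq_smallest_part_plus_rest by auto
    show "?f ` ?G \<subseteq> ?D"
    proof (rule image_subsetI)
      fix p assume "p \<in> ?G"
      then obtain s S where p: "p = (s, S)" and "S \<in> distinct_partitions_gt s (int n - int (r * s))"
        by blast
      then have "finite S" "S \<subseteq> {s<..}" and "int (r * s + \<Sum>S) = int n"
        unfolding distinct_partitions_gt_def by (auto simp del: of_nat_sum)
      moreover from this have "s \<notin> S" by auto
      ultimately show "?f p \<in> ?D"
        unfolding p
        using assms by (simp only: of_nat_eq_iff) (auto simp: Min_insert_greaterThan sum_mset_mset_set)
    qed
    show "?g ` ?D \<subseteq> ?G"
    proof (rule image_subsetI)
      fix M assume "M \<in> ?D"
      with assms remove_smallest_part_in_distinct_partitions_gt[of r M]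
      show "?g M \<in> ?G" by auto
    qed
  qed
  then have "card ?D = card ?G"
    by (simp add: bij_betw_same_card)
  also have "\<dots> = (\<Sum>s\<le>n. card (distinct_partitions_gt s (int n - int (r * s))))"
    by (simp add: finite_distinct_partitions_gt)
  finally show ?thesis .
qed

theorem corollary13:
  fixes n :: nat
  assumes "n \<ge> 4"
  shows "int (D3 n) = 2 * int (A (n - 3)) - 2 * int (A (n - 1)) + 2 * int (A n)"
proof -
  have "D3 n = (\<Sum>s\<le>n. card (distinct_partitions_gt s (int n - int (3 * s))))"
    unfolding D3_def by (rule card_partitions_smallest_part_mult) simp
  then have "int (D3 n) = (\<Sum>s\<le>n. Q s (int n - 3 * int s))"
    by (simp add: Q_def)
  also have "\<dots> = Q_tail 0 (int n)"
    using sum_Q_eq_Q_tail_0[of "int n"] assms by simp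
  also have "\<dots> = 2 * Q 0 (int n) - 2 * Q 0 (int (n - 1)) + 2 * Q 0 (int (n - 3))"
    using assms by (simp add: Q_tail_def)
  finally show ?thesis
    by (simp add: A_eq_Q_0)
qed

end
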